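(* Let $G$ be a finite bipartite graph having a nonempty channel $C$. Then to each perfect matching $\mu$ of $G$ one can assign a nonempty set of edges $S(\mu)\subseteq E$ such that: (i) $S(\mu)$ is a simple cycle of even length; (ii) every second edge of $S(\mu)$ lies in $\mu$; (iii) $S(\mu)$ depends only on the edges of $\mu$ that contain a vertex of $C$; (iv) if $\mu'$ is a perfect matching with $S(\mu)=\mu\oplus\mu'$ (symmetric difference), then $S(\mu')=S(\mu)$.
   Context: A channel of a graph $G=(V,E)$ is a set $C\subseteq V$ such that every vertex of $G$ is adjacent to an even number of vertices of $C$. *)

theory Defs
  imports Main
begin

definition simple_graph :: "'a set \<Rightarrow> 'a set set \<Rightarrow> bool" where
  "simple_graph V E \<longleftrightarrow> finite V \<and> (\<forall>e\<in>E. e \<subseteq> V \<and> card e = 2)"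

definition bipartite :: "'a set \<Rightarrow> 'a set set \<Rightarrow> bool" where
  "bipartite V E \<longleftrightarrow> (\<exists>X Y. X \<union> Y = V \<and> X \<inter> Y = {} \<and>
      (\<forall>e\<in>E. \<exists>x y. x \<in> X \<and> y \<in> Y \<and> e = {x, y}))"

definition channel :: "'a set \<Rightarrow> 'a set set \<Rightarrow> 'a set \<Rightarrow> bool" where
  "channel V E C \<longleftrightarrow> C \<subseteq> V \<and> (\<forall>v\<in>V. even (card {u\<in>C. {u, v} \<in> E}))"

definition perfect_matching :: "'a set \<Rightarrow> 'a set set \<Rightarrow> 'a set set \<Rightarrow> bool" where
  "perfect_matching V E M \<longleftrightarrow> M \<subseteq> E \<and> (\<forall>v\<in>V. \<exists>!e. e \<in> M \<and> v \<in> e)"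

definition cycle_edges :: "'a list \<Rightarrow> 'a set set" where
  "cycle_edges xs = {{xs ! i, xs ! ((i + 1) mod length xs)} | i. i < length xs}"

definition simple_cycle :: "'a set \<Rightarrow> 'a set set \<Rightarrow> 'a list \<Rightarrow> bool" where
  "simple_cycle V E xs \<longleftrightarrow> distinct xs \<and> length xs \<ge> 3 \<and> set xs \<subseteq> V \<and>
     (\<forall>i < length xs. {xs ! i, xs ! ((i + 1) mod length xs)} \<in> E)"

definition sym_diff :: "'b set \<Rightarrow> 'b set \<Rightarrow> 'b set" where
  "sym_diff A B = (A - B) \<union> (B - A)"

end

theory Submission
  imports Defs
begin

text \<open>Fix \<open>c\<^sub>0 \<in> C\<close> and orient the bipartition \<open>X, Y\<close> so that \<open>c\<^sub>0 \<in> X\<close>. Since every vertex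
  has an even number of neighbours in \<open>C\<close>, each vertex \<open>y\<close> can pair off its \<open>C\<close>-neighbours by a
  fixed-point-free involution, chosen once and for all. A perfect matching \<open>\<mu>\<close> then induces a
  map on \<open>C \<inter> X\<close>: from \<open>c\<close> go along the \<open>\<mu>\<close>-edge to \<open>y\<close>, and then to the partner of \<open>c\<close> at \<open>y\<close>.
  The orbit of \<open>c\<^sub>0\<close> under this map is \<open>\<rho>\<close>-shaped; its cycle \<open>c\<^sub>1, \<dots>, c\<^sub>k\<close> (\<open>k \<ge> 2\<close>) gives the
  even cycle \<open>c\<^sub>1 y\<^sub>1 c\<^sub>2 y\<^sub>2 \<dots> c\<^sub>k y\<^sub>k\<close> in which every other edge lies in \<open>\<mu>\<close>, and only \<open>\<mu>\<close>-edges
  meeting \<open>C\<close> are ever consulted. Switching \<open>\<mu>\<close> along this cycle leaves the tail of the orbit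
  alone and turns the map on the cycle into its inverse, so the new orbit runs through the
  same cycle backwards.\<close>

section \<open>\<open>\<rho>\<close>-shaped orbits\<close>

definition rho_orbit :: "('a \<Rightarrow> 'a) \<Rightarrow> 'a \<Rightarrow> 'a list \<Rightarrow> 'a list \<Rightarrow> bool" where
  "rho_orbit f x ts cs \<longleftrightarrow> distinct (ts @ cs) \<and> cs \<noteq> [] \<and>
     (\<forall>i < length (ts @ cs). (f ^^ i) x = (ts @ cs) ! i) \<and> (f ^^ length (ts @ cs)) x = cs ! 0"

lemma rho_orbit_funpow:
  "rho_orbit f x ts cs \<Longrightarrow> i < length (ts @ cs) \<Longrightarrow> (f ^^ i) x = (ts @ cs) ! i"
  unfolding rho_orbit_def by blast

lemma rho_orbit_length_le:
  assumes r: "rho_orbit f x ts cs" and r': "rho_orbit f x ts' cs'"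
  shows "length (ts @ cs) \<le> length (ts' @ cs')"
proof (rule ccontr)
  let ?n = "length (ts' @ cs')"
  assume "\<not> ?thesis"
  hence lt: "?n < length (ts @ cs)" by simp
  have lts': "length ts' < ?n" using r' unfolding rho_orbit_def by simp
  have "(ts @ cs) ! ?n = (f ^^ ?n) x" using rho_orbit_funpow[OF r lt] by simp
  also have "\<dots> = (ts' @ cs') ! length ts'" using r' unfolding rho_orbit_def by (simp add: nth_append)
  also have "\<dots> = (ts @ cs) ! length ts'" using rho_orbit_funpow[OF r' lts'] rho_orbit_funpow[OF r] lts' lt
    by simp
  finally have "?n = length ts'"
    using r lt lts' unfolding rho_orbit_def by (simp add: nth_eq_iff_index_eq)
  thus False using lts' by simp
qed

lemma rho_orbit_unique:
  assumes r: "rho_orbit f x ts cs" and r': "rho_orbit f x ts' cs'"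
  shows "ts = ts' \<and> cs = cs'"
proof -
  have len: "length (ts @ cs) = length (ts' @ cs')"
    using rho_orbit_length_le[OF r r'] rho_orbit_length_le[OF r' r] by simp
  have same: "ts @ cs = ts' @ cs'"
    by (rule nth_equalityI) (use len rho_orbit_funpow[OF r] rho_orbit_funpow[OF r'] in auto)
  have "(ts @ cs) ! length ts = (f ^^ length (ts @ cs)) x"
    using r unfolding rho_orbit_def by (simp add: nth_append)
  also have "\<dots> = (ts @ cs) ! length ts'"
    using r' same len unfolding rho_orbit_def by (simp add: nth_append)
  finally have "(ts @ cs) ! length ts = (ts @ cs) ! length ts'" .
  moreover have "length ts < length (ts @ cs)" "length ts' < length (ts @ cs)"
    using r r' len unfolding rho_orbit_def by (simp_all flip: length_greater_0_conv)
  ultimately have "length ts = length ts'"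
    using r unfolding rho_orbit_def by (simp add: nth_eq_iff_index_eq)
  thus ?thesis using same by simp
qed

lemma funpow_closed: "(\<forall>y\<in>A. f y \<in> A) \<Longrightarrow> x \<in> A \<Longrightarrow> (f ^^ i) x \<in> A"
  by (induction i) auto

lemma rho_orbit_exists:
  assumes "finite A" and closed: "\<forall>y\<in>A. f y \<in> A" and "x \<in> A"
  shows "\<exists>ts cs. rho_orbit f x ts cs"
proof -
  define s where "s i = (f ^^ i) x" for i
  have "\<not> inj_on s {0..card A}"
  proof
    assume "inj_on s {0..card A}"
    hence "card (s ` {0..card A}) = card A + 1" by (simp add: card_image)
    moreover have "s ` {0..card A} \<subseteq> A" using funpow_closed[OF closed \<open>x \<in> A\<close>] s_def by auto
    ultimately show False using card_mono[OF \<open>finite A\<close>, of "s ` {0..card A}"] by linarith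
  qed
  then obtain a b where "a \<noteq> b" "s a = s b" unfolding inj_on_def by blast
  define repeats where "repeats n \<longleftrightarrow> (\<exists>j<n. s j = s n)" for n
  have "\<exists>n. repeats n" using \<open>a \<noteq> b\<close> \<open>s a = s b\<close> unfolding repeats_def by (metis linorder_neqE_nat)
  define n where "n = (LEAST n. repeats n)"
  obtain j where j: "j < n" "s j = s n"
    using LeastI_ex[OF \<open>\<exists>n. repeats n\<close>] unfolding n_def repeats_def by blast
  have "distinct (map s [0..<n])"
  proof (rule ccontr)
    assume "\<not> distinct (map s [0..<n])"
    then obtain a b where "a < b" "b < n" "s a = s b"
      unfolding distinct_conv_nth by (auto, metis linorder_neqE_nat)
    hence "repeats b" unfolding repeats_def by blast
    thus False using Least_le[of repeats b] \<open>b < n\<close> unfolding n_def by simp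
  qed
  moreover have "map s [0..<j] @ map s [j..<n] = map s [0..<n]"
    using j(1) by (metis le_add_diff_inverse map_append nat_less_le upt_add_eq_append zero_le)
  ultimately have "rho_orbit f x (map s [0..<j]) (map s [j..<n])"
    unfolding rho_orbit_def using j by (auto simp: s_def)
  thus ?thesis by blast
qed

lemma rho_orbit_step_tail:
  assumes r: "rho_orbit f x ts cs" and i: "i < length ts"
  shows "f (ts ! i) = (ts @ cs) ! Suc i"
proof -
  have "cs \<noteq> []" using r unfolding rho_orbit_def by blast
  hence "Suc i < length (ts @ cs)" using i by (simp flip: length_greater_0_conv)
  moreover have "ts ! i = (f ^^ i) x" using rho_orbit_funpow[OF r, of i] i by (simp add: nth_append)
  ultimately show ?thesis using rho_orbit_funpow[OF r, of "Suc i"] by simp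
qed

lemma rho_orbit_step_cycle:
  assumes r: "rho_orbit f x ts cs" and j: "j < length cs"
  shows "f (cs ! j) = cs ! (Suc j mod length cs)"
proof -
  have "cs ! j = (f ^^ (length ts + j)) x"
    using rho_orbit_funpow[OF r, of "length ts + j"] j by (simp add: nth_append)
  hence step: "f (cs ! j) = (f ^^ Suc (length ts + j)) x" by simp
  show ?thesis
  proof (cases "Suc j < length cs")
    case True
    thus ?thesis using step rho_orbit_funpow[OF r, of "Suc (length ts + j)"] by (simp add: nth_append)
  next
    case False
    hence "Suc j = length cs" using j by simp
    hence "Suc (length ts + j) = length (ts @ cs)" "Suc j mod length cs = 0" by simp_all
    thus ?thesis using step r unfolding rho_orbit_def by metis
  qed
qed

lemma rho_orbit_cycle_closed:
  assumes "rho_orbit f x ts cs" and "c \<in> set cs"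
  shows "f c \<in> set cs"
proof -
  obtain j where "j < length cs" "c = cs ! j" using \<open>c \<in> set cs\<close> by (metis in_set_conv_nth)
  moreover have "Suc j mod length cs < length cs" using \<open>j < length cs\<close> by (metis gr_implies_not0 mod_less_divisor neq0_conv)
  ultimately show ?thesis using rho_orbit_step_cycle[OF assms(1)] by simp
qed

lemma rho_orbit_subset:
  assumes r: "rho_orbit f x ts cs" and closed: "\<forall>y\<in>A. f y \<in> A" and "x \<in> A"
  shows "set (ts @ cs) \<subseteq> A"
proof
  fix y assume "y \<in> set (ts @ cs)"
  then obtain i where "i < length (ts @ cs)" "y = (ts @ cs) ! i" by (metis in_set_conv_nth)
  thus "y \<in> A" using rho_orbit_funpow[OF r] funpow_closed[OF closed \<open>x \<in> A\<close>] by metis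
qed

lemma rho_orbitI:
  assumes "distinct (ts @ cs)" and "cs \<noteq> []" and start: "(ts @ cs) ! 0 = x"
    and step: "\<forall>i < length (ts @ cs).
      f ((ts @ cs) ! i) = (if Suc i < length (ts @ cs) then (ts @ cs) ! Suc i else cs ! 0)"
  shows "rho_orbit f x ts cs"
proof -
  let ?n = "length (ts @ cs)"
  have orbit: "(f ^^ i) x = (ts @ cs) ! i" if "i < ?n" for i
    using that
  proof (induction i)
    case (Suc i)
    thus ?case using step by simp
  qed (use start in simp)
  have "0 < ?n" using \<open>cs \<noteq> []\<close> by simp
  hence "(f ^^ ?n) x = f ((ts @ cs) ! (?n - 1))"
    using orbit[of "?n - 1"] by (metis Suc_diff_1 comp_apply diff_less funpow.simps(2) zero_less_one)
  also have "\<dots> = cs ! 0" using step \<open>0 < ?n\<close> by (metis Suc_diff_1 diff_less less_irrefl zero_less_one)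
  finally show ?thesis unfolding rho_orbit_def using assms(1,2) orbit by blast
qed

lemma nth_rotate_rev:
  assumes "i < length cs"
  shows "(hd cs # rev (tl cs)) ! i = cs ! ((length cs - i) mod length cs)"
proof (cases cs)
  case (Cons a r)
  show ?thesis
  proof (cases i)
    case (Suc i')
    hence "i' < length r" using assms Cons by simp
    thus ?thesis using Cons Suc by (simp add: rev_nth)
  qed (use Cons in simp)
qed (use assms in simp)

lemma mod_succ_reflect:
  assumes "k < (n::nat)"
  shows "Suc ((n - Suc k mod n) mod n) mod n = (n - k) mod n"
proof (cases "Suc k < n")
  case False
  hence "Suc k = n" using assms by simp
  thus ?thesis by auto
next
  case True
  hence "Suc (n - Suc k) = n - k" by simp
  thus ?thesis using True by simp
qed

lemma rho_orbit_reverse_cycle: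
  assumes r: "rho_orbit f x ts cs"
    and tail: "\<forall>t\<in>set ts. g t = f t" and inverse: "\<forall>c\<in>set cs. g (f c) = c"
  shows "rho_orbit g x ts (hd cs # rev (tl cs))"
proof -
  define cs' where "cs' = hd cs # rev (tl cs)"
  define n where "n = length cs"
  have "cs \<noteq> []" and dist: "distinct (ts @ cs)" using r unfolding rho_orbit_def by blast+
  hence cs': "length cs' = n" "set cs' = set cs" "distinct cs'" "cs' ! 0 = cs ! 0"
    using cs'_def n_def by (cases cs; auto)+
  have n: "0 < n" using \<open>cs \<noteq> []\<close> n_def by simp
  have reflect: "cs' ! i = cs ! ((n - i) mod n)" if "i < n" for i
    using nth_rotate_rev that cs'_def n_def by simp
  have step: "g (cs' ! k) = cs' ! (Suc k mod n)" if k: "k < n" for k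
  proof -
    define a where "a = (n - Suc k mod n) mod n"
    have a: "a < n" using n a_def by simp
    have "f (cs ! a) = cs ! (Suc a mod n)" using rho_orbit_step_cycle[OF r] a n_def by simp
    also have "\<dots> = cs' ! k" using mod_succ_reflect[OF k] reflect[OF k] a_def by simp
    finally have "g (cs' ! k) = cs ! a" using inverse a n_def by (metis nth_mem)
    thus ?thesis using reflect[of "Suc k mod n"] n a_def by simp
  qed
  show ?thesis unfolding cs'_def[symmetric]
  proof (rule rho_orbitI)
    show "distinct (ts @ cs')" using dist cs' by auto
    show "(ts @ cs') ! 0 = x"
      using rho_orbit_funpow[OF r, of 0] cs'(4) \<open>cs \<noteq> []\<close> by (cases ts) auto
    show "\<forall>i < length (ts @ cs').
      g ((ts @ cs') ! i) = (if Suc i < length (ts @ cs') then (ts @ cs') ! Suc i else cs' ! 0)"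
    proof (intro allI impI)
      fix i assume i: "i < length (ts @ cs')"
      show "g ((ts @ cs') ! i) = (if Suc i < length (ts @ cs') then (ts @ cs') ! Suc i else cs' ! 0)"
      proof (cases "i < length ts")
        case True
        hence "g ((ts @ cs') ! i) = (ts @ cs) ! Suc i"
          using tail rho_orbit_step_tail[OF r] by (simp add: nth_append)
        thus ?thesis using True cs' n n_def by (auto simp: nth_append)
      next
        case False
        hence "(ts @ cs') ! i = cs' ! (i - length ts)" "Suc i - length ts = Suc (i - length ts)"
          by (simp_all add: nth_append Suc_diff_le)
        moreover have "Suc (i - length ts) mod n = (if Suc i < length (ts @ cs') then Suc (i - length ts) else 0)"
        proof (cases "Suc i < length (ts @ cs')")
          case False
          hence "Suc (i - length ts) = n" using i \<open>\<not> i < length ts\<close> cs'(1) by simp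
          thus ?thesis using False by simp
        qed (use \<open>\<not> i < length ts\<close> cs'(1) in auto)
        ultimately show ?thesis using step[of "i - length ts"] i False cs'(1) by (simp add: nth_append)
      qed
    qed
  qed (simp add: cs'_def)
qed

section \<open>Interleaving a cycle with its mates\<close>

definition weave :: "('a \<Rightarrow> 'a) \<Rightarrow> 'a list \<Rightarrow> 'a list" where
  "weave m cs = concat (map (\<lambda>c. [c, m c]) cs)"

lemma length_weave [simp]: "length (weave m cs) = 2 * length cs"
  unfolding weave_def by (induction cs) auto

lemma set_weave: "set (weave m cs) = set cs \<union> m ` set cs"
  unfolding weave_def by auto

lemma nth_weave:
  "i < 2 * length cs \<Longrightarrow> weave m cs ! i = (if even i then cs ! (i div 2) else m (cs ! (i div 2)))"
proof (induction cs arbitrary: i)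
  case (Cons c cs)
  consider "i = 0" | "i = 1" | j where "i = Suc (Suc j)" by (metis One_nat_def not0_implies_Suc)
  thus ?case
  proof cases
    case 3
    hence "weave m (c # cs) ! i = weave m cs ! j" by (simp add: weave_def)
    thus ?thesis using Cons 3 by simp
  qed (simp_all add: weave_def)
qed simp

lemma distinct_weave:
  "distinct cs \<Longrightarrow> inj_on m (set cs) \<Longrightarrow> set cs \<inter> m ` set cs = {} \<Longrightarrow> distinct (weave m cs)"
  unfolding weave_def by (induction cs) auto

lemma weave_edge:
  assumes "i < 2 * length cs"
  shows "{weave m cs ! i, weave m cs ! ((i + 1) mod (2 * length cs))} =
    (if even i then {cs ! (i div 2), m (cs ! (i div 2))}
     else {m (cs ! (i div 2)), cs ! (Suc (i div 2) mod length cs)})"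
proof (cases "even i")
  case True
  hence "i + 1 < 2 * length cs" using assms by presburger
  thus ?thesis using True assms by (simp add: nth_weave)
next
  case False
  then obtain j where i: "i = 2 * j + 1" by (blast elim: oddE)
  have "(i + 1) mod (2 * length cs) = 2 * (Suc j mod length cs)"
    unfolding i by (simp add: mult_mod_right)
  moreover have "0 < length cs" using assms by linarith
  hence "Suc j mod length cs < length cs" by simp
  ultimately show ?thesis using False assms i by (simp add: nth_weave)
qed

lemma cycle_edges_weave:
  assumes succ: "\<forall>j < length cs. f (cs ! j) = cs ! (Suc j mod length cs)"
  shows "cycle_edges (weave m cs) = {{c, m c} | c. c \<in> set cs} \<union> {{m c, f c} | c. c \<in> set cs}"
    (is "_ = ?matched \<union> ?linking")
proof (intro equalityI subsetI)
  fix e assume "e \<in> cycle_edges (weave m cs)"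
  then obtain i where i: "i < 2 * length cs"
    and e: "e = {weave m cs ! i, weave m cs ! ((i + 1) mod (2 * length cs))}"
    unfolding cycle_edges_def by auto
  hence "i div 2 < length cs" by simp
  thus "e \<in> ?matched \<union> ?linking" using weave_edge[OF i] e succ by (auto split: if_splits)
next
  have edge: "{weave m cs ! i, weave m cs ! ((i + 1) mod length (weave m cs))} \<in> cycle_edges (weave m cs)"
    if "i < 2 * length cs" for i
    using that unfolding cycle_edges_def by auto
  fix e assume "e \<in> ?matched \<union> ?linking"
  then obtain j where j: "j < length cs" and "e = {cs ! j, m (cs ! j)} \<or> e = {m (cs ! j), f (cs ! j)}"
    by (auto simp: in_set_conv_nth)
  moreover have "{cs ! j, m (cs ! j)} \<in> cycle_edges (weave m cs)"
    using edge[of "2 * j"] weave_edge[of "2 * j" cs m] j by simp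
  moreover have "{m (cs ! j), f (cs ! j)} \<in> cycle_edges (weave m cs)"
    using edge[of "2 * j + 1"] weave_edge[of "2 * j + 1" cs m] j succ by simp
  ultimately show "e \<in> cycle_edges (weave m cs)" by blast
qed

section \<open>The walk along a channel\<close>

lemma fixpoint_free_involution_exists:
  assumes "finite A" and "even (card A)"
  shows "\<exists>g. \<forall>u\<in>A. g u \<in> A \<and> g u \<noteq> u \<and> g (g u) = u"
  using assms
proof (induction "card A" arbitrary: A rule: less_induct)
  case less
  show ?case
  proof (cases "A = {}")
    case False
    then obtain a where a: "a \<in> A" by blast
    have "card A \<noteq> 1" using less.prems(2) by auto
    have "A - {a} \<noteq> {}"
    proof
      assume "A - {a} = {}"
      hence "A = {a}" using a by blast
      thus False using \<open>card A \<noteq> 1\<close> by simp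
    qed
    then obtain b where b: "b \<in> A" "b \<noteq> a" by blast
    define A' where "A' = A - {a, b}"
    have "card A' = card A - 2" unfolding A'_def using a b less.prems(1) by (simp add: card_Diff_subset)
    moreover have "card {a, b} \<le> card A" using a b less.prems(1) by (intro card_mono) auto
    hence "card A \<ge> 2" using b by simp
    moreover have "finite A'" using less.prems(1) unfolding A'_def by simp
    ultimately obtain g where g: "\<forall>u\<in>A'. g u \<in> A' \<and> g u \<noteq> u \<and> g (g u) = u"
      using less.hyps[of A'] less.prems(2) by auto
    define h where "h = g(a := b, b := a)"
    have "h u \<in> A \<and> h u \<noteq> u \<and> h (h u) = u" if u: "u \<in> A" for u
    proof (cases "u = a \<or> u = b")
      case False
      hence "u \<in> A'" using u unfolding A'_def by simp
      thus ?thesis using g False unfolding A'_def h_def by auto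
    qed (use a b in \<open>auto simp: h_def\<close>)
    thus ?thesis by blast
  qed simp
qed

lemma perfect_matching_subset: "perfect_matching V E \<mu> \<Longrightarrow> \<mu> \<subseteq> E"
  unfolding perfect_matching_def by blast

lemma perfect_matching_partner_unique:
  assumes "perfect_matching V E \<mu>" and "v \<in> V" and "{v, a} \<in> \<mu>" and "{v, b} \<in> \<mu>"
  shows "a = b"
proof -
  have "{v, a} = {v, b}" using assms unfolding perfect_matching_def by blast
  thus ?thesis by (metis doubleton_eq_iff)
qed

lemma bipartite_with_side:
  assumes "bipartite V E" and "v \<in> V"
  obtains X Y where "X \<union> Y = V" "X \<inter> Y = {}" "\<forall>e\<in>E. \<exists>x y. x \<in> X \<and> y \<in> Y \<and> e = {x, y}" "v \<in> X"
proof -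
  obtain X Y where XY: "X \<union> Y = V" "X \<inter> Y = {}" "\<forall>e\<in>E. \<exists>x y. x \<in> X \<and> y \<in> Y \<and> e = {x, y}"
    using assms(1) unfolding bipartite_def by blast
  show ?thesis
  proof (cases "v \<in> X")
    case False
    have "\<forall>e\<in>E. \<exists>x y. x \<in> Y \<and> y \<in> X \<and> e = {x, y}" using XY(3) by (metis insert_commute)
    thus ?thesis using that[of Y X] XY(1,2) False assms(2) by blast
  qed (use that XY in blast)
qed

lemma simple_cycle_edges_nonempty:
  assumes "simple_cycle V E xs"
  shows "cycle_edges xs \<noteq> {}"
proof -
  have "3 \<le> length xs" using assms unfolding simple_cycle_def by simp
  hence "0 < length xs" by linarith
  hence "{xs ! 0, xs ! ((0 + 1) mod length xs)} \<in> cycle_edges xs" unfolding cycle_edges_def by blast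
  thus ?thesis by blast
qed

lemma simple_cycle_edges_subset: "simple_cycle V E xs \<Longrightarrow> cycle_edges xs \<subseteq> E"
  unfolding simple_cycle_def cycle_edges_def by auto

locale channel_walk =
  fixes V :: "'a set" and E :: "'a set set" and C X Y :: "'a set" and c0 :: 'a
  assumes finite_V: "finite V" and sides_cover: "X \<union> Y = V" and sides_disjoint: "X \<inter> Y = {}"
    and edges_between: "\<forall>e\<in>E. \<exists>x y. x \<in> X \<and> y \<in> Y \<and> e = {x, y}"
    and is_channel: "channel V E C" and start_C: "c0 \<in> C" and start_X: "c0 \<in> X"
begin

lemma C_subset_V: "C \<subseteq> V"
  using is_channel unfolding channel_def by blast

lemma edge_endpoints:
  assumes "{a, b} \<in> E"
  shows "(a \<in> X \<and> b \<in> Y) \<or> (a \<in> Y \<and> b \<in> X)"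
proof -
  obtain x y where "x \<in> X" "y \<in> Y" "{a, b} = {x, y}" using assms edges_between by blast
  thus ?thesis by (auto simp: doubleton_eq_iff)
qed

lemma edge_X_Y: "{a, b} \<in> E \<Longrightarrow> a \<in> X \<Longrightarrow> b \<in> Y"
  using edge_endpoints sides_disjoint by blast

lemma edge_Y_X: "{a, b} \<in> E \<Longrightarrow> a \<in> Y \<Longrightarrow> b \<in> X"
  using edge_endpoints sides_disjoint by blast

definition C_nbrs :: "'a \<Rightarrow> 'a set" where
  "C_nbrs y = {u \<in> C. {u, y} \<in> E}"

text \<open>The parity condition of a channel is used only here.\<close>

definition pairing :: "'a \<Rightarrow> 'a \<Rightarrow> 'a" where
  "pairing y = (SOME g. \<forall>u\<in>C_nbrs y. g u \<in> C_nbrs y \<and> g u \<noteq> u \<and> g (g u) = u)"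

lemma pairing:
  assumes "y \<in> V" and "u \<in> C_nbrs y"
  shows "pairing y u \<in> C_nbrs y \<and> pairing y u \<noteq> u \<and> pairing y (pairing y u) = u"
proof -
  have "finite (C_nbrs y)" using finite_V C_subset_V unfolding C_nbrs_def by (auto intro: finite_subset)
  moreover have "even (card (C_nbrs y))" using is_channel assms(1) unfolding channel_def C_nbrs_def by blast
  ultimately have "\<exists>g. \<forall>u\<in>C_nbrs y. g u \<in> C_nbrs y \<and> g u \<noteq> u \<and> g (g u) = u"
    by (rule fixpoint_free_involution_exists)
  hence "\<forall>u\<in>C_nbrs y. pairing y u \<in> C_nbrs y \<and> pairing y u \<noteq> u \<and> pairing y (pairing y u) = u"
    unfolding pairing_def by (rule someI_ex)
  thus ?thesis using assms(2) by blast
qed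

definition C_part :: "'a set set \<Rightarrow> 'a set set" where
  "C_part \<mu> = {e \<in> \<mu>. e \<inter> C \<noteq> {}}"

text \<open>The walk reads a matching \<open>\<mu>\<close> only through \<open>C_part \<mu>\<close>; this is property (iii).\<close>

definition mate :: "'a set set \<Rightarrow> 'a \<Rightarrow> 'a" where
  "mate M c = (SOME u. {c, u} \<in> M)"

definition succ :: "'a set set \<Rightarrow> 'a \<Rightarrow> 'a" where
  "succ M c = pairing (mate M c) c"

lemma mate_in_matching:
  assumes pm: "perfect_matching V E \<mu>" and c: "c \<in> C"
  shows "{c, mate (C_part \<mu>) c} \<in> \<mu>"
proof -
  have "c \<in> V" using c C_subset_V by blast
  then obtain e where e: "e \<in> \<mu>" "c \<in> e" using pm unfolding perfect_matching_def by blast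
  moreover have "e \<in> E" using e pm unfolding perfect_matching_def by blast
  ultimately obtain x y where "e = {x, y}" using edges_between by blast
  then obtain u where "e = {c, u}" using e(2) by blast
  hence "{c, u} \<in> C_part \<mu>" using e c unfolding C_part_def by blast
  hence "{c, mate (C_part \<mu>) c} \<in> C_part \<mu>" unfolding mate_def by (rule someI)
  thus ?thesis unfolding C_part_def by blast
qed

lemma mate_unique:
  "perfect_matching V E \<mu> \<Longrightarrow> c \<in> C \<Longrightarrow> {c, u} \<in> \<mu> \<Longrightarrow> mate (C_part \<mu>) c = u"
  using perfect_matching_partner_unique mate_in_matching C_subset_V by (metis subsetD)

lemma mate_Y: "perfect_matching V E \<mu> \<Longrightarrow> c \<in> C \<Longrightarrow> c \<in> X \<Longrightarrow> mate (C_part \<mu>) c \<in> Y"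
  using mate_in_matching perfect_matching_subset edge_X_Y by blast

lemma mate_inj:
  assumes pm: "perfect_matching V E \<mu>" and "a \<in> C" "b \<in> C" "a \<in> X"
    and eq: "mate (C_part \<mu>) a = mate (C_part \<mu>) b"
  shows "a = b"
proof -
  let ?y = "mate (C_part \<mu>) a"
  have "?y \<in> V" using mate_Y[OF pm] assms(2,4) sides_cover by blast
  moreover have "{?y, a} \<in> \<mu>" using mate_in_matching[OF pm \<open>a \<in> C\<close>] by (simp add: insert_commute)
  moreover have "{?y, b} \<in> \<mu>" using mate_in_matching[OF pm \<open>b \<in> C\<close>] eq by (simp add: insert_commute)
  ultimately show ?thesis using perfect_matching_partner_unique[OF pm] by blast
qed

lemma succ:
  assumes pm: "perfect_matching V E \<mu>" and c: "c \<in> C" "c \<in> X"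
  defines "y \<equiv> mate (C_part \<mu>) c"
  shows "succ (C_part \<mu>) c \<in> C \<and> succ (C_part \<mu>) c \<in> X \<and> succ (C_part \<mu>) c \<noteq> c
    \<and> pairing y (succ (C_part \<mu>) c) = c \<and> {y, succ (C_part \<mu>) c} \<in> E"
proof -
  have "y \<in> Y" using mate_Y[OF pm c] y_def by simp
  moreover have "c \<in> C_nbrs y"
    using c mate_in_matching[OF pm c(1)] perfect_matching_subset[OF pm]
    unfolding C_nbrs_def y_def by (auto simp: insert_commute)
  ultimately have "pairing y c \<in> C_nbrs y" "pairing y c \<noteq> c" "pairing y (pairing y c) = c"
    using pairing sides_cover by blast+
  moreover from this(1) have "pairing y c \<in> X"
    using edge_Y_X \<open>y \<in> Y\<close> unfolding C_nbrs_def by (auto simp: insert_commute)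
  ultimately show ?thesis unfolding succ_def y_def C_nbrs_def by (auto simp: insert_commute)
qed

definition orbit_cycle :: "'a set set \<Rightarrow> 'a list" where
  "orbit_cycle M = snd (SOME p. rho_orbit (succ M) c0 (fst p) (snd p))"

definition switching_cycle :: "'a set set \<Rightarrow> 'a set set" where
  "switching_cycle M = {{c, mate M c} | c. c \<in> set (orbit_cycle M)} \<union>
     {{mate M c, succ M c} | c. c \<in> set (orbit_cycle M)}"

lemma switching_cycle_eq:
  assumes "rho_orbit (succ M) c0 ts cs"
  shows "switching_cycle M = {{c, mate M c} | c. c \<in> set cs} \<union> {{mate M c, succ M c} | c. c \<in> set cs}"
proof -
  let ?P = "\<lambda>p. rho_orbit (succ M) c0 (fst p) (snd p)"
  have "?P (SOME p. ?P p)" using someI[of ?P "(ts, cs)"] assms by simp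
  hence "orbit_cycle M = cs" unfolding orbit_cycle_def using rho_orbit_unique[OF _ assms] by simp
  thus ?thesis unfolding switching_cycle_def by simp
qed

lemma succ_closed: "perfect_matching V E \<mu> \<Longrightarrow> \<forall>c\<in>C \<inter> X. succ (C_part \<mu>) c \<in> C \<inter> X"
  using succ by blast

lemma succ_orbit_exists: "perfect_matching V E \<mu> \<Longrightarrow> \<exists>ts cs. rho_orbit (succ (C_part \<mu>)) c0 ts cs"
proof (rule rho_orbit_exists)
  show "finite (C \<inter> X)" using finite_V C_subset_V by (simp add: finite_subset)
qed (use succ_closed start_C start_X in auto)

lemma succ_orbit_subset:
  "perfect_matching V E \<mu> \<Longrightarrow> rho_orbit (succ (C_part \<mu>)) c0 ts cs \<Longrightarrow> set (ts @ cs) \<subseteq> C \<inter> X"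
  by (erule rho_orbit_subset[OF _ succ_closed]) (use start_C start_X in simp_all)

lemma succ_cycle_length:
  assumes pm: "perfect_matching V E \<mu>" and r: "rho_orbit (succ (C_part \<mu>)) c0 ts cs"
  shows "2 \<le> length cs"
proof (rule ccontr)
  assume "\<not> 2 \<le> length cs"
  moreover have "cs \<noteq> []" using r unfolding rho_orbit_def by blast
  ultimately have "length cs = 1" by (simp add: Suc_leI le_antisym)
  hence "succ (C_part \<mu>) (cs ! 0) = cs ! 0" using rho_orbit_step_cycle[OF r, of 0] by simp
  moreover have "cs ! 0 \<in> C \<inter> X" using succ_orbit_subset[OF pm r] \<open>cs \<noteq> []\<close> by auto
  ultimately show False using succ[OF pm] by blast
qed

lemma switching_cycle_alternating:
  assumes pm: "perfect_matching V E \<mu>" and r: "rho_orbit (succ (C_part \<mu>)) c0 ts cs"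
  defines "xs \<equiv> weave (mate (C_part \<mu>)) cs"
  shows "simple_cycle V E xs \<and> even (length xs) \<and> switching_cycle (C_part \<mu>) = cycle_edges xs \<and>
    (\<forall>i < length xs. even i \<longrightarrow> {xs ! i, xs ! ((i + 1) mod length xs)} \<in> \<mu>)"
proof -
  have cs_CX: "set cs \<subseteq> C \<inter> X" using succ_orbit_subset[OF pm r] by simp
  have mates_Y: "mate (C_part \<mu>) ` set cs \<subseteq> Y" using mate_Y[OF pm] cs_CX by blast
  have "distinct xs" unfolding xs_def
  proof (rule distinct_weave)
    show "distinct cs" using r unfolding rho_orbit_def by simp
    show "inj_on (mate (C_part \<mu>)) (set cs)"
      using mate_inj[OF pm] cs_CX unfolding inj_on_def by blast
    show "set cs \<inter> mate (C_part \<mu>) ` set cs = {}"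
      using cs_CX mates_Y sides_disjoint by blast
  qed
  moreover have "set xs \<subseteq> V"
    using cs_CX mates_Y C_subset_V sides_cover unfolding xs_def set_weave by blast
  moreover have "4 \<le> length xs" using succ_cycle_length[OF pm r] unfolding xs_def by simp
  moreover have cycle: "switching_cycle (C_part \<mu>) = cycle_edges xs"
    unfolding switching_cycle_eq[OF r] xs_def
    by (rule cycle_edges_weave[symmetric]) (use rho_orbit_step_cycle[OF r] in blast)
  moreover have "switching_cycle (C_part \<mu>) \<subseteq> E"
    unfolding switching_cycle_eq[OF r]
    using mate_in_matching[OF pm] perfect_matching_subset[OF pm] succ[OF pm] cs_CX by blast
  moreover have "{xs ! i, xs ! ((i + 1) mod length xs)} \<in> cycle_edges xs" if "i < length xs" for i
    using that unfolding cycle_edges_def by blast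
  moreover have "{xs ! i, xs ! ((i + 1) mod length xs)} \<in> \<mu>" if "i < length xs" "even i" for i
  proof -
    have "cs ! (i div 2) \<in> C" using that cs_CX unfolding xs_def by (auto intro: nth_mem)
    thus ?thesis using weave_edge[of i cs] mate_in_matching[OF pm] that unfolding xs_def by simp
  qed
  ultimately show ?thesis unfolding simple_cycle_def xs_def by auto
qed

lemma succ_after_switch_cycle:
  assumes pm: "perfect_matching V E \<mu>" and pm': "perfect_matching V E \<mu>'"
    and switch: "switching_cycle (C_part \<mu>) = sym_diff \<mu> \<mu>'"
    and r: "rho_orbit (succ (C_part \<mu>)) c0 ts cs" and d: "d \<in> set cs"
  defines "f \<equiv> succ (C_part \<mu>)"
  shows "mate (C_part \<mu>') (f d) = mate (C_part \<mu>) d \<and> succ (C_part \<mu>') (f d) = d"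
proof -
  have d_CX: "d \<in> C" "d \<in> X" using d succ_orbit_subset[OF pm r] by auto
  have fd: "f d \<in> C" "f d \<noteq> d" "pairing (mate (C_part \<mu>) d) (f d) = d"
    using succ[OF pm d_CX] unfolding f_def by auto
  have "{f d, mate (C_part \<mu>) d} \<notin> \<mu>"
  proof
    assume "{f d, mate (C_part \<mu>) d} \<in> \<mu>"
    hence "mate (C_part \<mu>) (f d) = mate (C_part \<mu>) d" using mate_unique[OF pm fd(1)] by blast
    thus False using mate_inj[OF pm d_CX(1) fd(1) d_CX(2)] fd(2) by simp
  qed
  moreover have "{f d, mate (C_part \<mu>) d} \<in> switching_cycle (C_part \<mu>)"
    using switching_cycle_eq[OF r] d unfolding f_def by (auto simp: insert_commute)
  ultimately have "{f d, mate (C_part \<mu>) d} \<in> \<mu>'" using switch unfolding sym_diff_def by blast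
  hence "mate (C_part \<mu>') (f d) = mate (C_part \<mu>) d" using mate_unique[OF pm' fd(1)] by blast
  thus ?thesis using fd(3) unfolding succ_def by simp
qed

lemma succ_after_switch_tail:
  assumes pm: "perfect_matching V E \<mu>" and pm': "perfect_matching V E \<mu>'"
    and switch: "switching_cycle (C_part \<mu>) = sym_diff \<mu> \<mu>'"
    and r: "rho_orbit (succ (C_part \<mu>)) c0 ts cs" and t: "t \<in> set ts"
  shows "succ (C_part \<mu>') t = succ (C_part \<mu>) t"
proof -
  have t_CX: "t \<in> C" "t \<in> X" using t succ_orbit_subset[OF pm r] by auto
  have "t \<notin> set cs" using t r unfolding rho_orbit_def by auto
  have "{t, mate (C_part \<mu>) t} \<notin> switching_cycle (C_part \<mu>)"
  proof
    assume "{t, mate (C_part \<mu>) t} \<in> switching_cycle (C_part \<mu>)"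
    then obtain c where c: "c \<in> set cs"
      and "{t, mate (C_part \<mu>) t} = {c, mate (C_part \<mu>) c} \<or>
           {t, mate (C_part \<mu>) t} = {mate (C_part \<mu>) c, succ (C_part \<mu>) c}"
      using switching_cycle_eq[OF r] by blast
    moreover have "c \<in> C" "c \<in> X" using c succ_orbit_subset[OF pm r] by auto
    hence "mate (C_part \<mu>) c \<in> Y" by (rule mate_Y[OF pm])
    moreover have "succ (C_part \<mu>) c \<in> set cs" using rho_orbit_cycle_closed[OF r c] .
    ultimately show False using t_CX sides_disjoint \<open>t \<notin> set cs\<close> by (auto simp: doubleton_eq_iff)
  qed
  hence "{t, mate (C_part \<mu>) t} \<in> \<mu>'"
    using mate_in_matching[OF pm t_CX(1)] switch unfolding sym_diff_def by blast
  hence "mate (C_part \<mu>') t = mate (C_part \<mu>) t" using mate_unique[OF pm' t_CX(1)] by blast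
  thus ?thesis unfolding succ_def by simp
qed

lemma switching_cycle_sym_diff:
  assumes pm: "perfect_matching V E \<mu>" and pm': "perfect_matching V E \<mu>'"
    and switch: "switching_cycle (C_part \<mu>) = sym_diff \<mu> \<mu>'"
  shows "switching_cycle (C_part \<mu>') = switching_cycle (C_part \<mu>)"
proof -
  define f where "f = succ (C_part \<mu>)"
  define m where "m = mate (C_part \<mu>)"
  define f' where "f' = succ (C_part \<mu>')"
  define m' where "m' = mate (C_part \<mu>')"
  obtain ts cs where r: "rho_orbit f c0 ts cs" using succ_orbit_exists[OF pm] f_def by blast
  have reversed: "m' (f d) = m d" "f' (f d) = d" if "d \<in> set cs" for d
    using succ_after_switch_cycle[OF pm pm' switch r[unfolded f_def] that] f_def m_def f'_def m'_def
    by simp_all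
  have "rho_orbit f' c0 ts (hd cs # rev (tl cs))"
  proof (rule rho_orbit_reverse_cycle[OF r])
    show "\<forall>t\<in>set ts. f' t = f t"
      using succ_after_switch_tail[OF pm pm' switch r[unfolded f_def]] unfolding f_def f'_def by blast
    show "\<forall>c\<in>set cs. f' (f c) = c" using reversed(2) by blast
  qed
  moreover have "set (hd cs # rev (tl cs)) = set cs"
    using r unfolding rho_orbit_def by (cases cs) auto
  ultimately have S': "switching_cycle (C_part \<mu>') = {{c, m' c} | c. c \<in> set cs} \<union> {{m' c, f' c} | c. c \<in> set cs}"
    using switching_cycle_eq[of "C_part \<mu>'" ts "hd cs # rev (tl cs)"] unfolding f'_def m'_def by simp
  have S: "switching_cycle (C_part \<mu>) = {{c, m c} | c. c \<in> set cs} \<union> {{m c, f c} | c. c \<in> set cs}"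
    using switching_cycle_eq[OF r[unfolded f_def]] unfolding f_def m_def by simp
  have "f ` set cs = set cs"
  proof (rule endo_inj_surj)
    show "f ` set cs \<subseteq> set cs" using rho_orbit_cycle_closed[OF r] by blast
    show "inj_on f (set cs)" using inj_on_inverseI reversed(2) by metis
  qed simp
  hence reindex: "g ` set cs = (\<lambda>d. g (f d)) ` set cs" for g :: "'a \<Rightarrow> 'a set"
    by (metis image_image)
  have "(\<lambda>c. {c, m' c}) ` set cs = (\<lambda>d. {f d, m' (f d)}) ` set cs" by (rule reindex)
  also have "\<dots> = (\<lambda>c. {m c, f c}) ` set cs"
    by (rule image_cong) (simp_all add: reversed insert_commute)
  finally have matched: "(\<lambda>c. {c, m' c}) ` set cs = (\<lambda>c. {m c, f c}) ` set cs" .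
  have "(\<lambda>c. {m' c, f' c}) ` set cs = (\<lambda>d. {m' (f d), f' (f d)}) ` set cs" by (rule reindex)
  also have "\<dots> = (\<lambda>c. {c, m c}) ` set cs"
    by (rule image_cong) (simp_all add: reversed insert_commute)
  finally show ?thesis using matched S S' by (simp add: Setcompr_eq_image Un_commute)
qed

end

theorem theorem5p2:
  fixes V :: "'a set" and E :: "'a set set" and C :: "'a set"
  assumes "simple_graph V E" and "bipartite V E"
    and "channel V E C" and "C \<noteq> {}"
  shows "\<exists>S :: 'a set set \<Rightarrow> 'a set set.
    (\<forall>\<mu>. perfect_matching V E \<mu> \<longrightarrow>
        S \<mu> \<noteq> {} \<and> S \<mu> \<subseteq> E \<and>
        (\<exists>xs. simple_cycle V E xs \<and> even (length xs) \<and> S \<mu> = cycle_edges xs \<and>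
              (\<forall>i < length xs. even i \<longrightarrow> {xs ! i, xs ! ((i + 1) mod length xs)} \<in> \<mu>))) \<and>
    (\<forall>\<mu> \<mu>'. perfect_matching V E \<mu> \<longrightarrow> perfect_matching V E \<mu>' \<longrightarrow>
        {e \<in> \<mu>. e \<inter> C \<noteq> {}} = {e \<in> \<mu>'. e \<inter> C \<noteq> {}} \<longrightarrow> S \<mu> = S \<mu>') \<and>
    (\<forall>\<mu> \<mu>'. perfect_matching V E \<mu> \<longrightarrow> perfect_matching V E \<mu>' \<longrightarrow>
        S \<mu> = sym_diff \<mu> \<mu>' \<longrightarrow> S \<mu>' = S \<mu>)"
proof -
  obtain c0 where c0: "c0 \<in> C" using assms(4) by blast
  moreover have "C \<subseteq> V" using assms(3) unfolding channel_def by blast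
  ultimately have "c0 \<in> V" by blast
  obtain X Y where "X \<union> Y = V" "X \<inter> Y = {}"
    "\<forall>e\<in>E. \<exists>x y. x \<in> X \<and> y \<in> Y \<and> e = {x, y}" "c0 \<in> X"
    by (rule bipartite_with_side[OF assms(2) \<open>c0 \<in> V\<close>])
  moreover have "finite V" using assms(1) unfolding simple_graph_def by blast
  ultimately interpret channel_walk V E C X Y c0
    by (intro channel_walk.intro) (use assms(3) c0 in simp_all)
  show ?thesis
  proof (intro exI[of _ "\<lambda>\<mu>. switching_cycle (C_part \<mu>)"] conjI allI impI)
    fix \<mu> assume pm: "perfect_matching V E \<mu>"
    obtain ts cs where "rho_orbit (succ (C_part \<mu>)) c0 ts cs" using succ_orbit_exists[OF pm] by blast
    then obtain xs where xs: "simple_cycle V E xs" "even (length xs)"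
      "switching_cycle (C_part \<mu>) = cycle_edges xs"
      "\<forall>i < length xs. even i \<longrightarrow> {xs ! i, xs ! ((i + 1) mod length xs)} \<in> \<mu>"
      using switching_cycle_alternating[OF pm] by blast
    show "switching_cycle (C_part \<mu>) \<noteq> {}" using simple_cycle_edges_nonempty[OF xs(1)] xs(3) by simp
    show "switching_cycle (C_part \<mu>) \<subseteq> E" using simple_cycle_edges_subset[OF xs(1)] xs(3) by simp
    show "\<exists>xs. simple_cycle V E xs \<and> even (length xs) \<and> switching_cycle (C_part \<mu>) = cycle_edges xs \<and>
        (\<forall>i < length xs. even i \<longrightarrow> {xs ! i, xs ! ((i + 1) mod length xs)} \<in> \<mu>)"
      using xs by blast
  next
    fix \<mu> \<mu>' :: "'a set set"
    assume "{e \<in> \<mu>. e \<inter> C \<noteq> {}} = {e \<in> \<mu>'. e \<inter> C \<noteq> {}}"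
    thus "switching_cycle (C_part \<mu>) = switching_cycle (C_part \<mu>')" unfolding C_part_def by simp
  qed (rule switching_cycle_sym_diff)
qed

end
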